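(* Let $L$ be a non-torsion degree-zero line bundle on a complex elliptic curve $E$, equipped with a flat hermitian metric, and for $r\in\mathbb R_{>0}\sqcup\{\infty\}$ let $W_r\subset\operatorname{Tot}(L)$ be the open subset of vectors of length less than $r$ (so $W_\infty=\operatorname{Tot}(L)$). Let $r,R\in\mathbb R_{>0}\sqcup\{\infty\}$ and let $j:W_r\to W_R$ be a holomorphic open embedding which restricts to the identity on the zero section $E$. Then $j$ is fiberwise multiplication by a constant $c\in\mathbb C^*$ with $|c|\le R/r$.
   Context: A degree-zero line bundle on an elliptic curve admits a hermitian metric whose Chern connection is flat (the bundle is given by a unitary character of $\pi_1(E)$); lengths of vectors are measured with respect to such a metric. The zero section of $\operatorname{Tot}(L)$ is identified with $E$. *)

theory Defs
  imports "HOL-Analysis.Analysis"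
begin

text \<open>Model: E = C / Lambda with Lambda = Z w1 + Z w2 (w1, w2 R-linearly independent).
A degree-zero line bundle L with flat hermitian metric is given by a unitary character
chi of Lambda, determined by u1 = chi(w1), u2 = chi(w2) with |u1| = |u2| = 1.
Tot(L) = (C x C) / Lambda, where m w1 + n w2 acts by (z,v) -> (z + m w1 + n w2, u1^m u2^n v);
the length of a vector [(z,v)] is |v|.\<close>

definition lattice_basis :: "complex \<Rightarrow> complex \<Rightarrow> bool" where
  "lattice_basis w1 w2 \<longleftrightarrow> w1 \<noteq> 0 \<and> Im (w2 / w1) \<noteq> 0"

definition tot_rel :: "complex \<Rightarrow> complex \<Rightarrow> complex \<Rightarrow> complex \<Rightarrow>
    complex \<times> complex \<Rightarrow> complex \<times> complex \<Rightarrow> bool" where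
  "tot_rel w1 w2 u1 u2 p q \<longleftrightarrow>
     (\<exists>m n :: int. q = (fst p + of_int m * w1 + of_int n * w2,
                        u1 powi m * u2 powi n * snd p))"

text \<open>Preimage in C x C of W_r (vectors of length < r), r in (0, infinity].\<close>
definition tube :: "ereal \<Rightarrow> (complex \<times> complex) set" where
  "tube r = {p. ereal (cmod (snd p)) < r}"

definition holo2 :: "(complex \<times> complex \<Rightarrow> complex \<times> complex) \<Rightarrow> (complex \<times> complex) set \<Rightarrow> bool" where
  "holo2 f S \<longleftrightarrow> open S \<and> (\<forall>p\<in>S. \<exists>D. (f has_derivative D) (at p) \<and>
       (\<forall>a x y. D (a * x, a * y) = (a * fst (D (x, y)), a * snd (D (x, y)))))"

end

theory Submission
  imports Defs "HOL-Complex_Analysis.Cauchy_Integral_Formula"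
begin

(* Write j = (f, g) on the cover C x C of the tube.  Since j fixes the zero section and respects the
   lattice action, continuity and the discreteness of the lattice give f (z, 0) = z + l0 for a
   fixed lattice vector l0 and the equivariance
     j (z + w, chi w * v) = (f (z, v) + w, chi w * g (z, v))   for w in the lattice.
   The Taylor coefficients of f and g in v at v = 0 are entire functions of z, and equivariance
   makes them twisted periodic: a_k (z + w) = chi w ^ -k * a_k z and b_k (z + w) =
   chi w ^ (1 - k) * b_k z.  Their moduli are doubly periodic, so by Liouville they are constant,
   and since chi is not torsion they all vanish except b_1 =: c.  Hence j (z, v) = (z + l0, c * v);
   injectivity gives c \<noteq> 0, and j (W_r) \<subseteq> W_R gives |c| r \<le> R. *)

section \<open>Holomorphic dependence on parameters\<close>

lemma continuous_on_contour_integral_param: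
  assumes "path \<gamma>" "continuous_on {0..1} (\<lambda>t. vector_derivative \<gamma> (at t))"
    and "continuous_on (U \<times> path_image \<gamma>) (\<lambda>(x, w). F x w)"
  shows "continuous_on U (\<lambda>x. contour_integral \<gamma> (F x))"
proof -
  have "continuous_on (U \<times> {0..1}) (\<lambda>p. (fst p, \<gamma> (snd p)))"
    using assms(1) unfolding path_def
    by (intro continuous_on_Pair continuous_on_fst continuous_on_id
        continuous_on_compose2[of "{0..1}" \<gamma>, OF _ continuous_on_snd]) auto
  moreover have "(\<lambda>p. (fst p, \<gamma> (snd p))) ` (U \<times> {0..1}) \<subseteq> U \<times> path_image \<gamma>"
    by (auto simp: path_image_def)
  ultimately have "continuous_on (U \<times> {0..1}) (\<lambda>p. (\<lambda>(x, w). F x w) (fst p, \<gamma> (snd p)))"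
    by (rule continuous_on_compose2[OF assms(3)])
  then have "continuous_on (U \<times> {0..1}) (\<lambda>p. F (fst p) (\<gamma> (snd p)))"
    by simp
  moreover have "continuous_on (U \<times> {0..1}) (\<lambda>p. vector_derivative \<gamma> (at (snd p)))"
    by (intro continuous_on_compose2[OF assms(2)] continuous_intros) auto
  ultimately have "continuous_on (U \<times> cbox 0 1) (\<lambda>(x, t). F x (\<gamma> t) * vector_derivative \<gamma> (at t))"
    unfolding case_prod_unfold cbox_interval by (intro continuous_intros)
  then show ?thesis
    unfolding contour_integral_integral cbox_interval[symmetric]
    by (rule integral_continuous_on_param)
qed

lemma holomorphic_on_contour_integral_circlepath_param:
  assumes "open U" "0 \<le> \<rho>"
    and cont: "continuous_on (U \<times> sphere a \<rho>) (\<lambda>(z, w). F z w)"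
    and holo: "\<And>w. w \<in> sphere a \<rho> \<Longrightarrow> (\<lambda>z. F z w) holomorphic_on U"
  shows "(\<lambda>z. contour_integral (circlepath a \<rho>) (F z)) holomorphic_on U"
proof -
  let ?\<gamma> = "circlepath a \<rho>"
  have image_\<gamma>: "path_image ?\<gamma> = sphere a \<rho>"
    using assms(2) by (simp add: path_image_circlepath_nonneg)
  have deriv_\<gamma>: "continuous_on {0..1} (\<lambda>t. vector_derivative ?\<gamma> (at t))"
    by (simp add: vector_derivative_circlepath) (intro continuous_intros)
  have swap: "contour_integral (linepath p q) (\<lambda>z. contour_integral ?\<gamma> (F z)) =
      contour_integral ?\<gamma> (\<lambda>w. contour_integral (linepath p q) (\<lambda>z. F z w))"
    and integrable: "(\<lambda>w. contour_integral (linepath p q) (\<lambda>z. F z w)) contour_integrable_on ?\<gamma>"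
    if "closed_segment p q \<subseteq> U" for p q
  proof -
    have "continuous_on (path_image (linepath p q) \<times> path_image ?\<gamma>) (\<lambda>(z, w). F z w)"
      using that image_\<gamma> by (intro continuous_on_subset[OF cont]) auto
    then show "contour_integral (linepath p q) (\<lambda>z. contour_integral ?\<gamma> (F z)) =
        contour_integral ?\<gamma> (\<lambda>w. contour_integral (linepath p q) (\<lambda>z. F z w))"
      using deriv_\<gamma> by (intro contour_integral_swap) auto
    from \<open>continuous_on (path_image (linepath p q) \<times> path_image ?\<gamma>) _\<close>
    have "continuous_on (path_image ?\<gamma> \<times> path_image (linepath p q)) (\<lambda>(w, z). F z w)"
      by (rule continuous_on_swap_args)
    then show "(\<lambda>w. contour_integral (linepath p q) (\<lambda>z. F z w)) contour_integrable_on ?\<gamma>"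
      by (intro contour_integrable_continuous_circlepath continuous_on_contour_integral_param) auto
  qed
  \<comment> \<open>Morera: swapping the order of integration turns a triangle integral into an integral
    over the circle of triangle integrals of the holomorphic functions \<open>F _ w\<close>.\<close>
  have triangle: "contour_integral (linepath x y) (\<lambda>z. contour_integral ?\<gamma> (F z)) +
      contour_integral (linepath y z) (\<lambda>z. contour_integral ?\<gamma> (F z)) +
      contour_integral (linepath z x) (\<lambda>z. contour_integral ?\<gamma> (F z)) = 0"
    if hull: "convex hull {x, y, z} \<subseteq> U" for x y z
  proof -
    have seg: "closed_segment p q \<subseteq> U" if "p \<in> {x, y, z}" "q \<in> {x, y, z}" for p q
      unfolding segment_convex_hull using that by (intro order_trans[OF hull_mono hull]) auto
    have "contour_integral (linepath x y) (\<lambda>z. F z w) + contour_integral (linepath y z) (\<lambda>z. F z w)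
        + contour_integral (linepath z x) (\<lambda>z. F z w) = 0" if "w \<in> path_image ?\<gamma>" for w
      using Cauchy_theorem_triangle[OF holomorphic_on_subset[OF holo[OF that[unfolded image_\<gamma>]] hull]]
      by (rule has_chain_integral_chain_integral3)
    then have "contour_integral ?\<gamma> (\<lambda>w. contour_integral (linepath x y) (\<lambda>z. F z w) +
        contour_integral (linepath y z) (\<lambda>z. F z w) + contour_integral (linepath z x) (\<lambda>z. F z w)) = 0"
      using contour_integral_eq[where g = "\<lambda>_. 0"] by fastforce
    then show ?thesis
      using seg by (simp add: swap integrable contour_integral_add[symmetric] contour_integrable_add)
  qed
  have "continuous_on U (\<lambda>z. contour_integral ?\<gamma> (F z))"
    using cont image_\<gamma> deriv_\<gamma> by (intro continuous_on_contour_integral_param) auto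
  then have "(\<lambda>z. contour_integral ?\<gamma> (F z)) analytic_on U"
    using triangle \<open>open U\<close> by (intro Morera_local_triangle) blast
  then show ?thesis
    by (rule analytic_imp_holomorphic)
qed

lemma holomorphic_on_higher_deriv_param:
  assumes "open U" "0 < \<rho>"
    and cont: "continuous_on (U \<times> cball a \<rho>) (\<lambda>(z, w). F z w)"
    and holo_w: "\<And>z. z \<in> U \<Longrightarrow> F z holomorphic_on ball a \<rho>"
    and holo_z: "\<And>w. w \<in> sphere a \<rho> \<Longrightarrow> (\<lambda>z. F z w) holomorphic_on U"
  shows "(\<lambda>z. (deriv ^^ k) (F z) a) holomorphic_on U"
proof -
  let ?G = "\<lambda>z w. F z w / (w - a) ^ Suc k"
  have "(deriv ^^ k) (F z) a = fact k / (2 * pi * \<i>) * contour_integral (circlepath a \<rho>) (?G z)"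
    if "z \<in> U" for z
  proof -
    have "continuous_on (cball a \<rho>) (\<lambda>w. (\<lambda>(z, w). F z w) (z, w))"
      using that by (intro continuous_on_compose2[OF cont] continuous_intros) auto
    then have "(?G z has_contour_integral (2 * pi * \<i>) / fact k * (deriv ^^ k) (F z) a) (circlepath a \<rho>)"
      using assms(2) that by (intro Cauchy_has_contour_integral_higher_derivative_circlepath holo_w) auto
    then show ?thesis
      by (simp add: contour_integral_unique)
  qed
  moreover have "(\<lambda>z. contour_integral (circlepath a \<rho>) (?G z)) holomorphic_on U"
  proof (rule holomorphic_on_contour_integral_circlepath_param)
    have "continuous_on (U \<times> sphere a \<rho>) (\<lambda>(z, w). F z w)"
      by (rule continuous_on_subset[OF cont]) auto
    then show "continuous_on (U \<times> sphere a \<rho>) (\<lambda>(z, w). ?G z w)"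
      using assms(2) unfolding case_prod_unfold by (intro continuous_intros) (auto simp: dist_norm)
    show "(\<lambda>z. ?G z w) holomorphic_on U" if "w \<in> sphere a \<rho>" for w
      using that assms(2) by (intro holomorphic_intros holo_z) auto
  qed (use assms in auto)
  ultimately show ?thesis
    by (simp cong: holomorphic_cong add: holomorphic_intros)
qed

lemma higher_deriv_scaled_affine:
  assumes "F holomorphic_on D" "G holomorphic_on D" "open D" "0 \<in> D"
    and scale: "\<And>v. v \<in> D \<Longrightarrow> u * v \<in> D"
    and eq: "\<And>v. v \<in> D \<Longrightarrow> F (u * v) = \<alpha> * G v + \<beta>"
    and "1 \<le> k"
  shows "u ^ k * (deriv ^^ k) F 0 = \<alpha> * (deriv ^^ k) G 0"
proof -
  have "u ^ k * (deriv ^^ k) F 0 = (deriv ^^ k) (\<lambda>v. F (u * v)) 0"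
    using higher_deriv_compose_linear[OF assms(1,3,3,4) scale] by simp
  also have "\<dots> = (deriv ^^ k) (\<lambda>v. \<alpha> * G v + \<beta>) 0"
  proof (rule higher_deriv_transform_within_open[OF _ _ assms(3,4) eq])
    have "F \<circ> (\<lambda>v. u * v) holomorphic_on D"
      using scale by (intro holomorphic_on_compose_gen[OF _ assms(1)] holomorphic_intros) auto
    then show "(\<lambda>v. F (u * v)) holomorphic_on D"
      by (simp add: o_def)
  qed (auto intro!: holomorphic_intros assms(2))
  also have "\<dots> = (deriv ^^ k) (\<lambda>v. \<alpha> * G v) 0 + (deriv ^^ k) (\<lambda>v. \<beta>) 0"
    by (rule higher_deriv_add[OF _ _ assms(3,4)]) (auto intro!: holomorphic_intros assms(2))
  also have "\<dots> = \<alpha> * (deriv ^^ k) G 0"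
    using higher_deriv_cmult[OF assms(2,4,3)] \<open>1 \<le> k\<close> by simp
  finally show ?thesis .
qed

lemma holomorphic_eq_affine_if_higher_deriv_zero:
  assumes "f holomorphic_on ball a \<rho>" "w \<in> ball a \<rho>"
    and "\<And>k. 2 \<le> k \<Longrightarrow> (deriv ^^ k) f a = 0"
  shows "f w = f a + deriv f a * (w - a)"
proof -
  have "(\<lambda>n. (deriv ^^ n) f a / fact n * (w - a) ^ n) sums
      (\<Sum>n\<in>{0, 1}. (deriv ^^ n) f a / fact n * (w - a) ^ n)"
    by (rule sums_finite) (use assms(3) in auto)
  from sums_unique2[OF this holomorphic_power_series[OF assms(1,2)]] show ?thesis
    by simp
qed

lemma field_differentiable_components:
  assumes "(f has_derivative (\<lambda>h. (h * a, h * b))) (at x)"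
  shows "(\<lambda>x. fst (f x)) field_differentiable at x" "(\<lambda>x. snd (f x)) field_differentiable at x"
proof -
  have "(\<lambda>h. h * c) = (*) c" for c :: 'a
    by (simp add: fun_eq_iff mult.commute)
  then show "(\<lambda>x. fst (f x)) field_differentiable at x" "(\<lambda>x. snd (f x)) field_differentiable at x"
    using has_derivative_fst[OF assms] has_derivative_snd[OF assms]
    unfolding field_differentiable_def has_field_derivative_def by auto
qed

lemma holo2_slices_field_differentiable:
  assumes "holo2 j S" "(z, v) \<in> S"
  shows "(\<lambda>w. fst (j (z, w))) field_differentiable at v" "(\<lambda>w. snd (j (z, w))) field_differentiable at v"
    and "(\<lambda>w. fst (j (w, v))) field_differentiable at z" "(\<lambda>w. snd (j (w, v))) field_differentiable at z"
proof -
  obtain D where D: "(j has_derivative D) (at (z, v))"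
    and linear: "\<And>a x y. D (a * x, a * y) = (a * fst (D (x, y)), a * snd (D (x, y)))"
    using assms unfolding holo2_def by blast
  have D_fibre: "(\<lambda>h. D (0, h)) = (\<lambda>h. (h * fst (D (0, 1)), h * snd (D (0, 1))))"
  proof
    show "D (0, h) = (h * fst (D (0, 1)), h * snd (D (0, 1)))" for h
      using linear[of h 0 1] by simp
  qed
  have D_base: "(\<lambda>h. D (h, 0)) = (\<lambda>h. (h * fst (D (1, 0)), h * snd (D (1, 0))))"
  proof
    show "D (h, 0) = (h * fst (D (1, 0)), h * snd (D (1, 0)))" for h
      using linear[of h 1 0] by simp
  qed
  have "((\<lambda>w. (z, w)) has_derivative (\<lambda>h. (0, h))) (at v)"
    by (intro has_derivative_Pair has_derivative_const has_derivative_ident)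
  from has_derivative_compose[OF this D, unfolded D_fibre]
  show "(\<lambda>w. fst (j (z, w))) field_differentiable at v" "(\<lambda>w. snd (j (z, w))) field_differentiable at v"
    by (rule field_differentiable_components)+
  have "((\<lambda>w. (w, v)) has_derivative (\<lambda>h. (h, 0))) (at z)"
    by (intro has_derivative_Pair has_derivative_const has_derivative_ident)
  from has_derivative_compose[OF this D, unfolded D_base]
  show "(\<lambda>w. fst (j (w, v))) field_differentiable at z" "(\<lambda>w. snd (j (w, v))) field_differentiable at z"
    by (rule field_differentiable_components)+
qed

lemma holo2_imp_continuous_on: "holo2 j S \<Longrightarrow> continuous_on S j"
  unfolding holo2_def by (meson continuous_at_imp_continuous_on has_derivative_continuous)

section \<open>Lattices and doubly periodic entire functions\<close>

definition lattice_coords :: "complex \<Rightarrow> complex \<Rightarrow> complex \<Rightarrow> real \<times> real" where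
  "lattice_coords w1 w2 z =
     (let t = Im (z / w1) / Im (w2 / w1) in (Re (z / w1) - t * Re (w2 / w1), t))"

lemma real_coords_eq_iff:
  assumes "Im \<tau> \<noteq> 0"
  shows "\<zeta> = of_real s + of_real t * \<tau> \<longleftrightarrow> t = Im \<zeta> / Im \<tau> \<and> s = Re \<zeta> - t * Re \<tau>"
  using assms by (auto simp: complex_eq_iff field_simps)

lemma lattice_coords_eq_iff:
  assumes "lattice_basis w1 w2"
  shows "lattice_coords w1 w2 z = (s, t) \<longleftrightarrow> z = of_real s * w1 + of_real t * w2"
proof -
  have "w1 \<noteq> 0" "Im (w2 / w1) \<noteq> 0"
    using assms by (auto simp: lattice_basis_def)
  then have "z = of_real s * w1 + of_real t * w2 \<longleftrightarrow> z / w1 = of_real s + of_real t * (w2 / w1)"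
    by (auto simp: field_simps)
  also have "\<dots> \<longleftrightarrow> lattice_coords w1 w2 z = (s, t)"
    unfolding real_coords_eq_iff[OF \<open>Im (w2 / w1) \<noteq> 0\<close>] lattice_coords_def Let_def by auto
  finally show ?thesis ..
qed

lemma lattice_coords_decompose:
  assumes "lattice_basis w1 w2"
  shows "z = of_real (fst (lattice_coords w1 w2 z)) * w1 + of_real (snd (lattice_coords w1 w2 z)) * w2"
  using lattice_coords_eq_iff[OF assms] by (metis prod.collapse)

lemma continuous_on_lattice_coords:
  assumes "lattice_basis w1 w2" "continuous_on S F"
  shows "continuous_on S (\<lambda>x. lattice_coords w1 w2 (F x))"
  using assms unfolding lattice_coords_def Let_def lattice_basis_def
  by (intro continuous_intros) auto

lemma continuous_Ints_valued_imp_constant: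
  fixes f :: "'a::topological_space \<Rightarrow> real"
  assumes "connected S" "continuous_on S f" "\<And>x. x \<in> S \<Longrightarrow> f x \<in> \<int>"
  shows "f constant_on S"
proof (rule continuous_discrete_range_constant[OF assms(1,2)])
  fix x assume "x \<in> S"
  have "1 \<le> norm (f y - f x)" if "y \<in> S" "f y \<noteq> f x" for y
    using that \<open>x \<in> S\<close> assms(3) Ints_nonzero_abs_ge1[of "f y - f x"] by auto
  then show "\<exists>e>0. \<forall>y. y \<in> S \<and> f y \<noteq> f x \<longrightarrow> e \<le> norm (f y - f x)"
    by (intro exI[of _ 1]) auto
qed

lemma continuous_lattice_valued_imp_constant:
  assumes "lattice_basis w1 w2" "connected S" "continuous_on S F"
    and "\<And>x. x \<in> S \<Longrightarrow> \<exists>m n::int. F x = of_int m * w1 + of_int n * w2"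
  shows "F constant_on S"
proof -
  have Ints: "fst (lattice_coords w1 w2 (F x)) \<in> \<int> \<and> snd (lattice_coords w1 w2 (F x)) \<in> \<int>"
    if x: "x \<in> S" for x
  proof -
    obtain m n :: int where "F x = of_real (of_int m) * w1 + of_real (of_int n) * w2"
      using assms(4)[OF x] by auto
    then have "lattice_coords w1 w2 (F x) = (of_int m, of_int n)"
      using lattice_coords_eq_iff[OF assms(1)] by blast
    then show ?thesis
      by simp
  qed
  have "(\<lambda>x. fst (lattice_coords w1 w2 (F x))) constant_on S"
    "(\<lambda>x. snd (lattice_coords w1 w2 (F x))) constant_on S"
    using Ints by (intro continuous_Ints_valued_imp_constant assms(2) continuous_intros
        continuous_on_lattice_coords assms(1,3); simp)+
  then show ?thesis
    using lattice_coords_decompose[OF assms(1)] unfolding constant_on_def by metis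
qed

lemma norm_periodic_int_multiple:
  assumes "\<And>z. norm (f (z + w)) = norm (f z)"
  shows "norm (f (z + of_int m * w)) = norm (f z)"
proof (induction m arbitrary: z rule: int_induct[where k = 0])
  case (step1 i)
  then show ?case using assms[of "z + of_int i * w"] by (simp add: algebra_simps)
next
  case (step2 i)
  then show ?case using assms[of "z + of_int (i - 1) * w"] by (simp add: algebra_simps)
qed simp

lemma Liouville_lattice_periodic_norm:
  assumes lattice: "lattice_basis w1 w2" and holo: "f holomorphic_on UNIV"
    and "\<And>z. norm (f (z + w1)) = norm (f z)" "\<And>z. norm (f (z + w2)) = norm (f z)"
  shows "f constant_on UNIV"
proof (rule Liouville_theorem[OF holo])
  define K where "K = (\<lambda>(s, t). of_real s * w1 + of_real t * w2) ` ({0..1} \<times> {0..1})"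
  have "compact (f ` K)"
    unfolding K_def case_prod_unfold
    by (intro compact_continuous_image compact_Times compact_Icc continuous_intros
        continuous_on_subset[OF holomorphic_on_imp_continuous_on[OF holo]]) auto
  then obtain B where B: "\<And>z. z \<in> K \<Longrightarrow> norm (f z) \<le> B"
    by (meson bounded_iff compact_imp_bounded imageI)
  have "norm (f z) \<le> B" for z
  proof -
    define s where "s = fst (lattice_coords w1 w2 z)"
    define t where "t = snd (lattice_coords w1 w2 z)"
    define z0 where "z0 = of_real (frac s) * w1 + of_real (frac t) * w2"
    have "z0 \<in> K"
      unfolding K_def z0_def by (rule image_eqI[of _ _ "(frac s, frac t)"]) (auto simp: less_imp_le[OF frac_lt_1])
    have "z = z0 + of_int \<lfloor>s\<rfloor> * w1 + of_int \<lfloor>t\<rfloor> * w2"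
      using lattice_coords_decompose[OF lattice, of z]
      unfolding z0_def s_def t_def frac_def by (simp add: algebra_simps)
    then have "norm (f z) = norm (f z0)"
      using norm_periodic_int_multiple[of f] assms(3,4) by metis
    with B \<open>z0 \<in> K\<close> show ?thesis
      by simp
  qed
  then show "bounded (range f)"
    by (auto simp: bounded_iff)
qed

lemma entire_twisted_periodic_eq_0:
  assumes "lattice_basis w1 w2" "f holomorphic_on UNIV" "cmod u1 = 1" "cmod u2 = 1"
    and twist1: "\<And>z. u1 ^ k * f (z + w1) = f z"
    and twist2: "\<And>z. u2 ^ k * f (z + w2) = f z"
    and "\<not> (u1 ^ k = 1 \<and> u2 ^ k = 1)"
  shows "f z = 0"
proof -
  have "f constant_on UNIV"
  proof (rule Liouville_lattice_periodic_norm[OF assms(1,2)])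
    show "norm (f (z + w1)) = norm (f z)" for z
      using arg_cong[OF twist1[of z], of norm] assms(3) by (simp add: norm_mult norm_power)
    show "norm (f (z + w2)) = norm (f z)" for z
      using arg_cong[OF twist2[of z], of norm] assms(4) by (simp add: norm_mult norm_power)
  qed
  then obtain c where c: "\<And>z. f z = c"
    by (auto simp: constant_on_def)
  have "u1 ^ k * c = c" "u2 ^ k * c = c"
    using twist1 twist2 c by metis+
  with assms(7) have "c = 0"
    by (metis mult_cancel_right2)
  with c show ?thesis
    by simp
qed

section \<open>The tube and its fibres\<close>

lemma ereal_mult_le_if_scaled_less:
  assumes "0 \<le> c" "0 < r"
    and less: "\<And>x. 0 \<le> x \<Longrightarrow> ereal x < r \<Longrightarrow> ereal (c * x) < R"
  shows "ereal c * r \<le> R"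
proof -
  have "0 < R"
    using less[of 0] \<open>0 < r\<close> by (simp add: zero_ereal_def)
  show ?thesis
  proof (cases R)
    case (real R0)
    show ?thesis
    proof (cases "c = 0")
      case False
      with \<open>0 \<le> c\<close> \<open>0 < R\<close> real have "0 \<le> R0 / c"
        by simp
      with less[of "R0 / c"] \<open>c \<noteq> 0\<close> real have "r \<le> ereal (R0 / c)"
        by (auto simp: not_less[symmetric])
      then have "ereal c * r \<le> ereal c * ereal (R0 / c)"
        using \<open>0 \<le> c\<close> by (intro ereal_mult_left_mono) auto
      with \<open>c \<noteq> 0\<close> real show ?thesis
        by simp
    qed (use \<open>0 < R\<close> in \<open>simp add: zero_ereal_def[symmetric] less_imp_le\<close>)
  qed (use \<open>0 < R\<close> in auto)
qed

definition fibre_disc :: "ereal \<Rightarrow> complex set" where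
  "fibre_disc r = {v. ereal (cmod v) < r}"

lemma tube_eq_Times: "tube r = UNIV \<times> fibre_disc r"
  by (auto simp: tube_def fibre_disc_def)

lemma fibre_disc_ereal [simp]: "fibre_disc (ereal \<rho>) = ball 0 \<rho>"
  and fibre_disc_PInf [simp]: "fibre_disc \<infinity> = UNIV"
  and fibre_disc_MInf [simp]: "fibre_disc (-\<infinity>) = {}"
  by (auto simp: fibre_disc_def)

lemma open_fibre_disc: "open (fibre_disc r)"
  and convex_fibre_disc: "convex (fibre_disc r)"
  by (cases r; simp)+

lemma zero_in_fibre_disc: "0 < r \<Longrightarrow> 0 \<in> fibre_disc r"
  by (simp add: fibre_disc_def zero_ereal_def)

lemma fibre_disc_norm_mono: "v \<in> fibre_disc r \<Longrightarrow> norm w \<le> norm v \<Longrightarrow> w \<in> fibre_disc r"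
  unfolding fibre_disc_def using ereal_less_eq(3) le_less_trans by blast

lemma ball_subset_fibre_disc:
  assumes "v \<in> fibre_disc r"
  obtains \<rho> where "v \<in> ball 0 \<rho>" "ball 0 \<rho> \<subseteq> fibre_disc r"
proof (cases r)
  case PInf
  with that[of "norm v + 1"] show ?thesis by simp
qed (use assms that in auto)

lemma cball_subset_fibre_disc:
  assumes "0 < r"
  obtains \<rho> where "0 < \<rho>" "cball 0 \<rho> \<subseteq> fibre_disc r"
  using open_contains_cball_eq[OF open_fibre_disc] zero_in_fibre_disc[OF assms] that by blast

lemma fibre_scalar_bound:
  assumes "0 < r" "j ` tube r \<subseteq> tube R" "\<And>p. p \<in> tube r \<Longrightarrow> snd (j p) = c * snd p"
  shows "ereal (cmod c) * r \<le> R"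
proof (rule ereal_mult_le_if_scaled_less[OF _ \<open>0 < r\<close>])
  fix x :: real assume "0 \<le> x" "ereal x < r"
  then have "(0, of_real x) \<in> tube r"
    by (simp add: tube_def)
  moreover from this assms(2) have "j (0, of_real x) \<in> tube R"
    by blast
  ultimately show "ereal (cmod c * x) < R"
    using assms(3) \<open>0 \<le> x\<close> by (simp add: tube_def norm_mult)
qed simp

section \<open>Maps between tubes in a flat line bundle\<close>

locale flat_bundle =
  fixes w1 w2 u1 u2 :: complex
  assumes lattice: "lattice_basis w1 w2" and unit1: "cmod u1 = 1" and unit2: "cmod u2 = 1"
begin

definition lat :: "int \<Rightarrow> int \<Rightarrow> complex" where
  "lat m n = of_int m * w1 + of_int n * w2"

definition chi :: "int \<Rightarrow> int \<Rightarrow> complex" where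
  "chi m n = u1 powi m * u2 powi n"

lemma tot_rel_iff: "tot_rel w1 w2 u1 u2 p q \<longleftrightarrow> (\<exists>m n. q = (fst p + lat m n, chi m n * snd p))"
  by (simp add: tot_rel_def lat_def chi_def add.assoc)

lemma norm_chi [simp]: "norm (chi m n) = 1"
  by (simp add: chi_def norm_mult norm_power_int unit1 unit2)

lemma chi_nonzero [simp]: "chi m n \<noteq> 0"
  using norm_chi[of m n] by (metis norm_zero zero_neq_one)

lemma lat_w1 [simp]: "lat 1 0 = w1" and lat_w2 [simp]: "lat 0 1 = w2"
  and chi_u1 [simp]: "chi 1 0 = u1" and chi_u2 [simp]: "chi 0 1 = u2"
  by (simp_all add: lat_def chi_def)

lemma tot_rel_refl: "tot_rel w1 w2 u1 u2 p p"
  unfolding tot_rel_iff by (intro exI[of _ 0]) (simp add: lat_def chi_def)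

lemma tot_rel_snd_eq_0_iff: "tot_rel w1 w2 u1 u2 p q \<Longrightarrow> snd q = 0 \<longleftrightarrow> snd p = 0"
  unfolding tot_rel_iff by auto

lemma lat_uminus: "lat (- m) (- n) = - lat m n"
  by (simp add: lat_def)

lemma lat_eq_iff [simp]: "lat m n = lat m' n' \<longleftrightarrow> m = m' \<and> n = n'"
proof -
  have "lattice_coords w1 w2 (lat m n) = (of_int m, of_int n)" for m n
    using lattice_coords_eq_iff[OF lattice] by (simp add: lat_def)
  then show ?thesis
    by (metis of_int_eq_iff prod.inject)
qed

lemma fibre_scalar_nonzero_if_injective:
  assumes "0 < r"
    and inj: "\<And>p q. p \<in> tube r \<Longrightarrow> q \<in> tube r \<Longrightarrow>
                tot_rel w1 w2 u1 u2 (j p) (j q) \<Longrightarrow> tot_rel w1 w2 u1 u2 p q"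
    and linear: "\<And>p. p \<in> tube r \<Longrightarrow> j p = (fst p + t, c * snd p)"
  shows "c \<noteq> 0"
proof
  assume "c = 0"
  obtain \<rho> where "0 < \<rho>" "cball 0 \<rho> \<subseteq> fibre_disc r"
    using cball_subset_fibre_disc[OF \<open>0 < r\<close>] .
  then have in_tube: "(0, of_real \<rho>) \<in> tube r" "(0, 0) \<in> tube r"
    by (auto simp: tube_eq_Times)
  with \<open>c = 0\<close> have "j (0, of_real \<rho>) = j (0, 0)"
    by (simp add: linear)
  with inj[OF in_tube] have "tot_rel w1 w2 u1 u2 (0, of_real \<rho>) (0, 0)"
    by (simp add: tot_rel_refl)
  with \<open>0 < \<rho>\<close> show False
    using tot_rel_snd_eq_0_iff by fastforce
qed

lemma continuous_lat_valued_imp_constant: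
  assumes "connected S" "continuous_on S F" "\<And>x. x \<in> S \<Longrightarrow> \<exists>m n. F x = lat m n"
  shows "F constant_on S"
  using continuous_lattice_valued_imp_constant[OF lattice assms(1,2)] assms(3)
  unfolding lat_def by blast

end

locale tube_map_fixing_zero_section = flat_bundle +
  fixes r :: ereal and j :: "complex \<times> complex \<Rightarrow> complex \<times> complex"
  assumes r_pos: "0 < r" and holo: "holo2 j (tube r)"
    and welldef: "\<And>p q. p \<in> tube r \<Longrightarrow> q \<in> tube r \<Longrightarrow>
                    tot_rel w1 w2 u1 u2 p q \<Longrightarrow> tot_rel w1 w2 u1 u2 (j p) (j q)"
    and zero_section: "\<And>z. tot_rel w1 w2 u1 u2 (j (z, 0)) (z, 0)"
begin

lemma continuous_on_j: "continuous_on (tube r) j"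
  using holo by (rule holo2_imp_continuous_on)

lemma holomorphic_on_fibre:
  "(\<lambda>v. fst (j (z, v))) holomorphic_on fibre_disc r" "(\<lambda>v. snd (j (z, v))) holomorphic_on fibre_disc r"
  using holo2_slices_field_differentiable(1,2)[OF holo]
  by (auto simp: holomorphic_on_open open_fibre_disc field_differentiable_def tube_eq_Times)

lemma holomorphic_on_base:
  assumes "v \<in> fibre_disc r"
  shows "(\<lambda>z. fst (j (z, v))) holomorphic_on UNIV" "(\<lambda>z. snd (j (z, v))) holomorphic_on UNIV"
  using holo2_slices_field_differentiable(3,4)[OF holo] assms
  by (auto simp: holomorphic_on_open field_differentiable_def tube_eq_Times)

lemma holomorphic_on_fibre_higher_deriv:
  "(\<lambda>z. (deriv ^^ k) (\<lambda>v. fst (j (z, v))) 0) holomorphic_on UNIV"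
  "(\<lambda>z. (deriv ^^ k) (\<lambda>v. snd (j (z, v))) 0) holomorphic_on UNIV"
proof -
  obtain \<rho> where "0 < \<rho>" and \<rho>: "cball 0 \<rho> \<subseteq> fibre_disc r"
    using cball_subset_fibre_disc[OF r_pos] .
  have "continuous_on (UNIV \<times> cball 0 \<rho>) j"
    using \<rho> by (intro continuous_on_subset[OF continuous_on_j]) (auto simp: tube_eq_Times)
  then have "continuous_on (UNIV \<times> cball 0 \<rho>) (\<lambda>(z, v). fst (j (z, v)))"
    "continuous_on (UNIV \<times> cball 0 \<rho>) (\<lambda>(z, v). snd (j (z, v)))"
    unfolding case_prod_unfold by (auto intro: continuous_intros)
  then show "(\<lambda>z. (deriv ^^ k) (\<lambda>v. fst (j (z, v))) 0) holomorphic_on UNIV"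
    "(\<lambda>z. (deriv ^^ k) (\<lambda>v. snd (j (z, v))) 0) holomorphic_on UNIV"
    using \<rho> \<open>0 < \<rho>\<close> ball_subset_cball[of 0 \<rho>]
    by (auto intro!: holomorphic_on_higher_deriv_param holomorphic_on_base
        holomorphic_on_subset[OF holomorphic_on_fibre(1)] holomorphic_on_subset[OF holomorphic_on_fibre(2)])
qed

lemma j_zero_section:
  obtains a b where "\<And>z. j (z, 0) = (z + lat a b, 0)"
proof -
  have fibre_0: "snd (j (z, 0)) = 0" and shift: "\<exists>m n. fst (j (z, 0)) - z = lat m n" for z
  proof -
    obtain m n where mn: "(z, 0) = (fst (j (z, 0)) + lat m n, chi m n * snd (j (z, 0)))"
      using zero_section[of z] unfolding tot_rel_iff by blast
    then show "snd (j (z, 0)) = 0"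
      by simp
    from mn have "fst (j (z, 0)) - z = lat (- m) (- n)"
      by (simp add: lat_uminus) (metis add_diff_cancel_left' minus_diff_eq)
    then show "\<exists>m n. fst (j (z, 0)) - z = lat m n"
      by blast
  qed
  have "continuous_on UNIV (\<lambda>z. j (z, 0))"
    using r_pos
    by (intro continuous_on_compose2[OF continuous_on_j] continuous_on_Pair continuous_on_id continuous_on_const)
       (auto simp: tube_eq_Times zero_in_fibre_disc)
  with shift have "(\<lambda>z. fst (j (z, 0)) - z) constant_on UNIV"
    by (intro continuous_lat_valued_imp_constant connected_UNIV continuous_intros) auto
  moreover obtain a b where "fst (j (0, 0)) - 0 = lat a b"
    using shift by blast
  ultimately have "fst (j (z, 0)) = z + lat a b" for z
    unfolding constant_on_def by (metis UNIV_I diff_eq_eq add.commute)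
  with fibre_0 show ?thesis
    using that by (metis prod.collapse)
qed

lemma j_equivariant:
  assumes "p \<in> tube r"
  shows "j (fst p + lat m n, chi m n * snd p) = (fst (j p) + lat m n, chi m n * snd (j p))"
proof -
  define g where "g p = (fst p + lat m n, chi m n * snd p)" for p :: "complex \<times> complex"
  have g_tube: "g p \<in> tube r" if "p \<in> tube r" for p
    using that by (auto simp: g_def tube_eq_Times norm_mult intro: fibre_disc_norm_mono)
  have related: "\<exists>m' n'. j (g p) = (fst (j p) + lat m' n', chi m' n' * snd (j p))" if "p \<in> tube r" for p
  proof -
    have "tot_rel w1 w2 u1 u2 p (g p)"
      unfolding tot_rel_iff g_def by blast
    from welldef[OF that g_tube[OF that] this] show ?thesis
      unfolding tot_rel_iff by (metis prod.collapse)
  qed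
  have "continuous_on (tube r) (\<lambda>p. j (g p))"
    using g_tube unfolding g_def
    by (intro continuous_on_compose2[OF continuous_on_j] continuous_intros) auto
  moreover have "\<exists>m' n'. fst (j (g p)) - fst (j p) = lat m' n'" if "p \<in> tube r" for p
    using related[OF that] by force
  \<comment> \<open>The lattice-valued defect is constant on the connected tube; on the zero section it is
    \<open>lat m n\<close>.\<close>
  ultimately have "(\<lambda>p. fst (j (g p)) - fst (j p)) constant_on tube r"
    using continuous_on_j
    by (intro continuous_lat_valued_imp_constant continuous_intros convex_connected)
       (auto simp: tube_eq_Times convex_Times convex_fibre_disc)
  moreover obtain a b where "\<And>z. j (z, 0) = (z + lat a b, 0)"
    using j_zero_section by metis
  moreover have "(0, 0) \<in> tube r"
    using r_pos by (simp add: tube_eq_Times zero_in_fibre_disc)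
  ultimately have "fst (j (g p)) - fst (j p) = lat m n"
    using assms unfolding constant_on_def g_def
    by (metis add_diff_cancel_right' fst_conv mult_zero_right snd_conv add_0)
  moreover obtain m' n' where "j (g p) = (fst (j p) + lat m' n', chi m' n' * snd (j p))"
    using related[OF assms] by blast
  ultimately show ?thesis
    unfolding g_def by simp
qed

lemma j_translate_generator:
  assumes "(w, u) \<in> {(w1, u1), (w2, u2)}" "v \<in> fibre_disc r"
  shows "j (z + w, u * v) = (fst (j (z, v)) + w, u * snd (j (z, v)))"
  using j_equivariant[of "(z, v)" 1 0] j_equivariant[of "(z, v)" 0 1] assms
  by (auto simp: tube_eq_Times)

lemma higher_deriv_fibre_twisted:
  assumes "(w, u) \<in> {(w1, u1), (w2, u2)}" "1 \<le> k"
  shows "u ^ k * (deriv ^^ k) (\<lambda>v. fst (j (z + w, v))) 0 = (deriv ^^ k) (\<lambda>v. fst (j (z, v))) 0"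
    and "u ^ k * (deriv ^^ k) (\<lambda>v. snd (j (z + w, v))) 0 = u * (deriv ^^ k) (\<lambda>v. snd (j (z, v))) 0"
proof -
  have scale: "u * v \<in> fibre_disc r" if "v \<in> fibre_disc r" for v
    using assms(1) that unit1 unit2 by (auto simp: norm_mult intro: fibre_disc_norm_mono)
  have "u ^ k * (deriv ^^ k) (\<lambda>v. fst (j (z + w, v))) 0 = 1 * (deriv ^^ k) (\<lambda>v. fst (j (z, v))) 0"
    using j_translate_generator[OF assms(1)]
    by (intro higher_deriv_scaled_affine[where D = "fibre_disc r" and \<beta> = w] holomorphic_on_fibre open_fibre_disc
        zero_in_fibre_disc r_pos scale assms(2)) simp_all
  then show "u ^ k * (deriv ^^ k) (\<lambda>v. fst (j (z + w, v))) 0 = (deriv ^^ k) (\<lambda>v. fst (j (z, v))) 0"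
    by simp
  show "u ^ k * (deriv ^^ k) (\<lambda>v. snd (j (z + w, v))) 0 = u * (deriv ^^ k) (\<lambda>v. snd (j (z, v))) 0"
    using j_translate_generator[OF assms(1)]
    by (intro higher_deriv_scaled_affine[where D = "fibre_disc r" and \<beta> = 0] holomorphic_on_fibre open_fibre_disc
        zero_in_fibre_disc r_pos scale assms(2)) simp_all
qed

lemma higher_deriv_fst_eq_0:
  assumes "\<not> (u1 ^ k = 1 \<and> u2 ^ k = 1)"
  shows "(deriv ^^ k) (\<lambda>v. fst (j (z, v))) 0 = 0"
proof (rule entire_twisted_periodic_eq_0[OF lattice holomorphic_on_fibre_higher_deriv(1) unit1 unit2 _ _ assms])
  have "1 \<le> k"
    using assms by (cases k) auto
  then show "u1 ^ k * (deriv ^^ k) (\<lambda>v. fst (j (z + w1, v))) 0 = (deriv ^^ k) (\<lambda>v. fst (j (z, v))) 0"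
    and "u2 ^ k * (deriv ^^ k) (\<lambda>v. fst (j (z + w2, v))) 0 = (deriv ^^ k) (\<lambda>v. fst (j (z, v))) 0" for z
    by (simp_all add: higher_deriv_fibre_twisted)
qed

lemma higher_deriv_snd_eq_0:
  assumes "\<not> (u1 ^ k = 1 \<and> u2 ^ k = 1)"
  shows "(deriv ^^ Suc k) (\<lambda>v. snd (j (z, v))) 0 = 0"
proof (rule entire_twisted_periodic_eq_0[OF lattice holomorphic_on_fibre_higher_deriv(2) unit1 unit2 _ _ assms])
  have "u ^ k * (deriv ^^ Suc k) (\<lambda>v. snd (j (z + w, v))) 0 = (deriv ^^ Suc k) (\<lambda>v. snd (j (z, v))) 0"
    if "(w, u) \<in> {(w1, u1), (w2, u2)}" for w u z
  proof -
    have "u \<noteq> 0"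
      using that unit1 unit2 by auto
    with higher_deriv_fibre_twisted(2)[OF that, of "Suc k" z] show ?thesis
      by (simp add: mult.assoc)
  qed
  then show "u1 ^ k * (deriv ^^ Suc k) (\<lambda>v. snd (j (z + w1, v))) 0 = (deriv ^^ Suc k) (\<lambda>v. snd (j (z, v))) 0"
    and "u2 ^ k * (deriv ^^ Suc k) (\<lambda>v. snd (j (z + w2, v))) 0 = (deriv ^^ Suc k) (\<lambda>v. snd (j (z, v))) 0" for z
    by simp_all
qed

lemma deriv_snd_constant: "deriv (\<lambda>v. snd (j (z, v))) 0 = deriv (\<lambda>v. snd (j (0, v))) 0"
proof -
  have periodic: "deriv (\<lambda>v. snd (j (z + w, v))) 0 = deriv (\<lambda>v. snd (j (z, v))) 0"
    if "(w, u) \<in> {(w1, u1), (w2, u2)}" for w u z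
  proof -
    have "u \<noteq> 0"
      using that unit1 unit2 by auto
    with higher_deriv_fibre_twisted(2)[OF that, of 1 z] show ?thesis
      by simp
  qed
  have "(\<lambda>z. deriv (\<lambda>v. snd (j (z, v))) 0) constant_on UNIV"
    using holomorphic_on_fibre_higher_deriv(2)[of 1]
    by (intro Liouville_lattice_periodic_norm[OF lattice]) (simp_all add: periodic[of w1 u1] periodic[of w2 u2])
  then show ?thesis
    by (auto simp: constant_on_def)
qed

lemma j_fibrewise_linear:
  assumes nontorsion: "\<And>k. 0 < k \<Longrightarrow> \<not> (u1 ^ k = 1 \<and> u2 ^ k = 1)"
  obtains a b c where "\<And>p. p \<in> tube r \<Longrightarrow> j p = (fst p + lat a b, c * snd p)"
proof -
  obtain a b where zero: "\<And>z. j (z, 0) = (z + lat a b, 0)"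
    using j_zero_section by metis
  define c where "c = deriv (\<lambda>v. snd (j (0, v))) 0"
  have linear: "j (z, v) = (z + lat a b, c * v)" if v_disc: "v \<in> fibre_disc r" for z v
  proof -
    obtain \<rho> where v: "v \<in> ball 0 \<rho>" and ball: "ball 0 \<rho> \<subseteq> fibre_disc r"
      using ball_subset_fibre_disc[OF v_disc] .
    have "fst (j (z, v)) = fst (j (z, 0)) + deriv (\<lambda>v. fst (j (z, v))) 0 * (v - 0)"
      using nontorsion
      by (intro holomorphic_eq_affine_if_higher_deriv_zero[OF holomorphic_on_subset[OF holomorphic_on_fibre(1) ball] v]
          higher_deriv_fst_eq_0) auto
    moreover have "deriv (\<lambda>v. fst (j (z, v))) 0 = 0"
      using higher_deriv_fst_eq_0[of 1 z] nontorsion[of 1] by simp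
    moreover have "(deriv ^^ k) (\<lambda>v. snd (j (z, v))) 0 = 0" if "2 \<le> k" for k
    proof -
      obtain l where "k = Suc l" "0 < l"
        using \<open>2 \<le> k\<close> by (cases k) auto
      with higher_deriv_snd_eq_0[OF nontorsion[OF \<open>0 < l\<close>]] show ?thesis
        by simp
    qed
    then have "snd (j (z, v)) = snd (j (z, 0)) + deriv (\<lambda>v. snd (j (z, v))) 0 * (v - 0)"
      by (rule holomorphic_eq_affine_if_higher_deriv_zero[OF holomorphic_on_subset[OF holomorphic_on_fibre(2) ball] v])
    ultimately show ?thesis
      using zero[of z] deriv_snd_constant[of z] unfolding c_def by (simp add: prod_eq_iff)
  qed
  show ?thesis
  proof (rule that)
    fix p assume "p \<in> tube r"
    then have "snd p \<in> fibre_disc r"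
      by (auto simp: tube_eq_Times)
    from linear[OF this, of "fst p"] show "j p = (fst p + lat a b, c * snd p)"
      by simp
  qed
qed

end

theorem lemma2p5p9:
  fixes w1 w2 u1 u2 :: complex and r R :: ereal
    and j :: "complex \<times> complex \<Rightarrow> complex \<times> complex"
  assumes lat: "lattice_basis w1 w2"
    and unit: "cmod u1 = 1" "cmod u2 = 1"
    and nontorsion: "\<not> (\<exists>k::nat. k > 0 \<and> u1 ^ k = 1 \<and> u2 ^ k = 1)"
    and rpos: "r > 0" and Rpos: "R > 0"
    and holo: "holo2 j (tube r)"
    and maps: "j ` tube r \<subseteq> tube R"
    and welldef: "\<And>p q. p \<in> tube r \<Longrightarrow> q \<in> tube r \<Longrightarrow>
                    tot_rel w1 w2 u1 u2 p q \<Longrightarrow> tot_rel w1 w2 u1 u2 (j p) (j q)"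
    and inj: "\<And>p q. p \<in> tube r \<Longrightarrow> q \<in> tube r \<Longrightarrow>
                    tot_rel w1 w2 u1 u2 (j p) (j q) \<Longrightarrow> tot_rel w1 w2 u1 u2 p q"
    and openim: "open {q. \<exists>p\<in>tube r. tot_rel w1 w2 u1 u2 (j p) q}"
    and zero: "\<And>z. tot_rel w1 w2 u1 u2 (j (z, 0)) (z, 0)"
  shows "\<exists>c::complex. c \<noteq> 0 \<and> ereal (cmod c) * r \<le> R \<and>
           (\<forall>p\<in>tube r. tot_rel w1 w2 u1 u2 (j p) (fst p, c * snd p))"
proof -
  interpret tube_map_fixing_zero_section w1 w2 u1 u2 r j
    using lat unit rpos holo welldef zero by unfold_locales
  obtain a b c where linear: "\<And>p. p \<in> tube r \<Longrightarrow> j p = (fst p + lat a b, c * snd p)"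
    using j_fibrewise_linear nontorsion by metis
  have "c \<noteq> 0"
    using fibre_scalar_nonzero_if_injective[OF rpos inj linear] .
  moreover have "ereal (cmod c) * r \<le> R"
    using fibre_scalar_bound[OF rpos maps] linear by simp
  moreover have "tot_rel w1 w2 u1 u2 (j p) (fst p, chi (- a) (- b) * c * snd p)" if "p \<in> tube r" for p
    unfolding linear[OF that] tot_rel_iff
    by (intro exI[of _ "- a"] exI[of _ "- b"]) (simp add: lat_uminus)
  ultimately show ?thesis
    by (intro exI[of _ "chi (- a) (- b) * c"]) (simp add: norm_mult)
qed

end
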